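(* Let $D$ be a Newton diagram in $2$ variables whose support $K$ has size $d$, is connected, and contains $(0,0)$. Then $\#(D)\ge\frac{d+5}{2}$.
   Context: For $m\in\mathbb Z^n$ write $|m|=m_1+\dots+m_n$; $e_1,\dots,e_n$ is the standard basis. A Newton diagram in $n$ variables is a function $D\colon\mathbb Z^n\to\{0,P,N\}$ ($P,N$ formal symbols) whose support $K=D^{-1}(\{P,N\})$ is a finite nonempty subset of $\mathbb N_0^n$. For $a\in\mathbb Z^n$ let $E(a)=\{a,a-e_1,\dots,a-e_n\}$; $E(a)$ is a node of $D$ if the image $D(E(a))$ equals $\{P\}$, $\{N\}$, $\{0,P\}$ or $\{0,N\}$. $\#(D)$ is the number of $a\in\mathbb Z^n$ for which $E(a)$ is a node. Two distinct points $m,m'$ are adjacent if $m-m'\in\{\pm e_j\}\cup\{e_j-e_k: j\ne k\}$; $K$ is connected if any two points of $K$ are joined by a path of successively adjacent points of $K$. The size of $K$ is $k-|a|+1$ where $k=\max_{m\in K}|m|$ and $a_j=\min_{m\in K}m_j$. *)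

theory Defs
  imports Complex_Main "HOL-Library.Product_Plus"
begin

datatype sym = Zero | P | N

definition e1 :: "int \<times> int" where "e1 = (1, 0)"
definition e2 :: "int \<times> int" where "e2 = (0, 1)"

definition support :: "(int \<times> int \<Rightarrow> sym) \<Rightarrow> (int \<times> int) set" where
  "support D = {m. D m \<in> {P, N}}"

definition newton_diagram2 :: "(int \<times> int \<Rightarrow> sym) \<Rightarrow> bool" where
  "newton_diagram2 D \<longleftrightarrow> finite (support D) \<and> support D \<noteq> {}
     \<and> support D \<subseteq> {m. fst m \<ge> 0 \<and> snd m \<ge> 0}"

definition E :: "int \<times> int \<Rightarrow> (int \<times> int) set" where
  "E a = {a, a - e1, a - e2}"

definition is_node :: "(int \<times> int \<Rightarrow> sym) \<Rightarrow> int \<times> int \<Rightarrow> bool" where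
  "is_node D a \<longleftrightarrow> D ` E a \<in> {{P}, {N}, {Zero, P}, {Zero, N}}"

definition num_nodes :: "(int \<times> int \<Rightarrow> sym) \<Rightarrow> nat" where
  "num_nodes D = card {a. is_node D a}"

definition adjacent :: "int \<times> int \<Rightarrow> int \<times> int \<Rightarrow> bool" where
  "adjacent m m' \<longleftrightarrow> m \<noteq> m' \<and>
     m - m' \<in> {e1, -e1, e2, -e2, e1 - e2, e2 - e1}"

definition connected_pts :: "(int \<times> int) set \<Rightarrow> bool" where
  "connected_pts K \<longleftrightarrow> (\<forall>x\<in>K. \<forall>y\<in>K.
     (\<lambda>u v. u \<in> K \<and> v \<in> K \<and> adjacent u v)\<^sup>*\<^sup>* x y)"

definition size_pts :: "(int \<times> int) set \<Rightarrow> int" where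
  "size_pts K = Max ((\<lambda>m. fst m + snd m) ` K)
     - (Min (fst ` K) + Min (snd ` K)) + 1"

end

theory Submission
  imports Defs
begin

(* Cut the plane into the anti-diagonal levels x + y = m.  A node E(a) with a on
   level m involves one point of level m and two neighbouring points of level m-1,
   so reading every level as a finite word over {0,P,N} (padded by 0 on the left),
   the nodes on level m are exactly the "node patterns" in the strip formed by the
   words of levels m-1 and m.

   The combinatorial core is a weight inequality for such strips: twice the number
   of node patterns plus the change of a run-counting potential of the words is
   at least 1 when the strip is not entirely 0, and at least 3 when one of the two
   words vanishes.  It follows from a four-letter local inequality by telescoping.

   Summing over all levels 0,...,k+1 (k the top level of the support) the potentials
   cancel; connectedness guarantees that every level 0..k meets the support, so
   2 #(D) >= 3 + k + 3.  Since the size of the support is k+1, this is the claim. *)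

section \<open>Words over {0,P,N} and node patterns\<close>

definition node_pattern :: "sym \<Rightarrow> sym \<Rightarrow> sym \<Rightarrow> bool" where
  "node_pattern p q r \<longleftrightarrow> {p, q, r} \<in> {{P}, {N}, {Zero, P}, {Zero, N}}"

lemma node_pattern_iff:
  "node_pattern p q r \<longleftrightarrow>
     (p \<noteq> Zero \<or> q \<noteq> Zero \<or> r \<noteq> Zero) \<and> \<not> (P \<in> {p, q, r} \<and> N \<in> {p, q, r})"
  unfolding node_pattern_def by (cases p; cases q; cases r) auto

text \<open>A nonzero letter followed by 0 or by the same letter (no sign flip); counting
  these along a word gives the potential that telescopes between levels.\<close>

definition no_flip :: "sym \<Rightarrow> sym \<Rightarrow> int" where
  "no_flip a b = (if a \<noteq> Zero \<and> (b = Zero \<or> b = a) then 1 else 0)"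

text \<open>Auxiliary potential comparing the letter below-left with the letter above.\<close>

definition mismatch :: "sym \<Rightarrow> sym \<Rightarrow> int" where
  "mismatch a c = (if a \<noteq> Zero \<and> c \<noteq> a then 1 else 0)"

text \<open>The weight of the strip formed by a lower word \<open>w\<close> and an upper word
  \<open>u\<close>, read on positions \<open>0..M\<close>; the upper letter \<open>u i\<close> sits
  above \<open>w (i - 1)\<close> and \<open>w i\<close>.\<close>

definition strip_weight :: "nat \<Rightarrow> (nat \<Rightarrow> sym) \<Rightarrow> (nat \<Rightarrow> sym) \<Rightarrow> int" where
  "strip_weight M w u = (\<Sum>i<Suc M. 2 * of_bool (node_pattern (u i) (w (i - 1)) (w i))
      + no_flip (u i) (u (Suc i)) - no_flip (w (i - 1)) (w i))"

definition no_flip_count :: "nat \<Rightarrow> (nat \<Rightarrow> sym) \<Rightarrow> int" where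
  "no_flip_count M w = (\<Sum>i<Suc M. no_flip (w i) (w (Suc i)))"

lemma no_flip_count_zero: "(\<And>i. w i = Zero) \<Longrightarrow> no_flip_count M w = 0"
  by (simp add: no_flip_count_def no_flip_def)

text \<open>The local inequalities: each term of a strip weight dominates the increment
  of a potential, plus a credit whenever the strip passes from nonzero to zero.\<close>

lemma local_weight:
  "2 * of_bool (node_pattern c a b) + no_flip c d - no_flip a b \<ge> mismatch b d - mismatch a c
     + (if \<not> (a = Zero \<and> c = Zero) \<and> (b = Zero \<and> d = Zero) then 1 else 0)"
  by (cases a; cases b; cases c; cases d) (simp_all add: node_pattern_iff no_flip_def mismatch_def)

lemma local_weight_upper_zero:
  "2 * of_bool (node_pattern Zero a b) + no_flip Zero Zero - no_flip a b
     \<ge> 2 * of_bool (b \<noteq> Zero) - 2 * of_bool (a \<noteq> Zero) + (if a \<noteq> Zero \<and> b = Zero then 3 else 0)"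
  by (cases a; cases b) (simp_all add: node_pattern_iff no_flip_def)

lemma local_weight_lower_zero:
  "2 * of_bool (node_pattern c Zero Zero) + no_flip c d - no_flip Zero Zero
     \<ge> 0 - 0 + (if c \<noteq> Zero \<and> d = Zero then 3 else 0)"
  by (cases c; cases d) (simp_all add: node_pattern_iff no_flip_def)

lemma telescope_credit:
  fixes g p :: "nat \<Rightarrow> int" and z :: "nat \<Rightarrow> bool" and c :: int
  assumes step: "\<And>i. i < n \<Longrightarrow> g i \<ge> p (Suc i) - p i + (if \<not> z i \<and> z (Suc i) then c else 0)"
    and p0: "p 0 = 0" and pn: "p n = 0" and zn: "z n" and jn: "j < n" and zj: "\<not> z j"
    and c0: "c \<ge> 0"
  shows "(\<Sum>i<n. g i) \<ge> c"
proof -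
  define credit where "credit i = (if \<not> z i \<and> z (Suc i) then c else 0)" for i
  have "(\<Sum>i<n. credit i) = (\<Sum>i<n. (p (Suc i) - p i) + credit i)"
    by (simp add: sum.distrib sum_lessThan_telescope p0 pn)
  also have "\<dots> \<le> (\<Sum>i<n. g i)"
    by (rule sum_mono) (use step in \<open>auto simp: credit_def\<close>)
  finally have sum_ge: "(\<Sum>i<n. credit i) \<le> (\<Sum>i<n. g i)" .
  text \<open>The last non-\<open>z\<close> position at or after \<open>j\<close> earns the credit.\<close>
  define S where "S = {i. j \<le> i \<and> i < n \<and> \<not> z i}"
  have "finite S" "j \<in> S" unfolding S_def using jn zj by auto
  define i0 where "i0 = Max S"
  have i0S: "i0 \<in> S" and i0_max: "\<And>i. i \<in> S \<Longrightarrow> i \<le> i0"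
    unfolding i0_def using \<open>finite S\<close> \<open>j \<in> S\<close> by (auto intro: Max_in)
  have "z (Suc i0)"
  proof (cases "Suc i0 = n")
    case False
    then have "Suc i0 < n" using i0S unfolding S_def by auto
    moreover have "Suc i0 \<notin> S" using i0_max by fastforce
    ultimately show ?thesis using i0S unfolding S_def by auto
  qed (use zn in simp)
  then have "credit i0 = c" using i0S unfolding S_def credit_def by auto
  moreover have "credit i0 \<le> (\<Sum>i<n. credit i)"
    by (rule member_le_sum) (use i0S c0 in \<open>auto simp: S_def credit_def\<close>)
  ultimately show ?thesis using sum_ge by linarith
qed

lemma strip_weight_ge_1:
  assumes w0: "w 0 = Zero" and u0: "u 0 = Zero"
    and tail: "\<And>i. i \<ge> M \<Longrightarrow> w i = Zero \<and> u i = Zero"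
    and nonzero: "w j \<noteq> Zero \<or> u j \<noteq> Zero"
  shows "strip_weight M w u \<ge> 1"
proof -
  have "j < M" using tail nonzero by (metis not_le)
  obtain j' where j': "j' < Suc M" "\<not> (w (j' - 1) = Zero \<and> u j' = Zero)"
  proof (cases "u j = Zero")
    case True
    then show ?thesis using that[of "Suc j"] nonzero \<open>j < M\<close> by auto
  qed (use that[of j] \<open>j < M\<close> in auto)
  show ?thesis unfolding strip_weight_def
  proof (rule telescope_credit[where p = "\<lambda>i. mismatch (w (i - 1)) (u i)"
        and z = "\<lambda>i. w (i - 1) = Zero \<and> u i = Zero"])
    fix i
    show "2 * of_bool (node_pattern (u i) (w (i - 1)) (w i)) + no_flip (u i) (u (Suc i))
        - no_flip (w (i - 1)) (w i)
      \<ge> mismatch (w (Suc i - 1)) (u (Suc i)) - mismatch (w (i - 1)) (u i)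
        + (if \<not> (w (i - 1) = Zero \<and> u i = Zero) \<and> (w (Suc i - 1) = Zero \<and> u (Suc i) = Zero)
           then 1 else 0)"
      unfolding diff_Suc_1 by (rule local_weight)
  qed (use w0 u0 tail[of M] tail[of "Suc M"] j' in \<open>auto simp: mismatch_def\<close>)
qed

lemma strip_weight_upper_zero:
  assumes w0: "w 0 = Zero" and u_zero: "\<And>i. u i = Zero"
    and tail: "\<And>i. i \<ge> M \<Longrightarrow> w i = Zero" and nonzero: "w j \<noteq> Zero"
  shows "strip_weight M w u \<ge> 3"
proof -
  have "j < M" using tail nonzero by (metis not_le)
  show ?thesis unfolding strip_weight_def u_zero
  proof (rule telescope_credit[where p = "\<lambda>i. 2 * of_bool (w (i - 1) \<noteq> Zero)"
        and z = "\<lambda>i. w (i - 1) = Zero" and j = "Suc j"])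
    fix i
    show "2 * of_bool (node_pattern Zero (w (i - 1)) (w i)) + no_flip Zero Zero - no_flip (w (i - 1)) (w i)
      \<ge> 2 * of_bool (w (Suc i - 1) \<noteq> Zero) - 2 * of_bool (w (i - 1) \<noteq> Zero)
        + (if w (i - 1) \<noteq> Zero \<and> w (Suc i - 1) = Zero then 3 else 0)"
      unfolding diff_Suc_1 by (rule local_weight_upper_zero)
  qed (use w0 tail[of M] \<open>j < M\<close> nonzero in auto)
qed

lemma strip_weight_lower_zero:
  assumes w_zero: "\<And>i. w i = Zero" and u0: "u 0 = Zero"
    and tail: "\<And>i. i \<ge> M \<Longrightarrow> u i = Zero" and nonzero: "u j \<noteq> Zero"
  shows "strip_weight M w u \<ge> 3"
proof -
  have "j < M" using tail nonzero by (metis not_le)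
  show ?thesis unfolding strip_weight_def w_zero
  proof (rule telescope_credit[where p = "\<lambda>i. 0" and z = "\<lambda>i. u i = Zero" and j = j])
    fix i
    show "2 * of_bool (node_pattern (u i) Zero Zero) + no_flip (u i) (u (Suc i)) - no_flip Zero Zero
      \<ge> 0 - 0 + (if u i \<noteq> Zero \<and> u (Suc i) = Zero then 3 else 0)"
      by (rule local_weight_lower_zero)
  qed (use u0 tail[of "Suc M"] \<open>j < M\<close> nonzero in auto)
qed

lemma strip_weight_eq:
  assumes w0: "w 0 = Zero" and w_tail: "\<And>i. i \<ge> M \<Longrightarrow> w i = Zero"
  shows "strip_weight M w u
     = 2 * int (card {i. i < Suc M \<and> node_pattern (u i) (w (i - 1)) (w i)})
       + no_flip_count M u - no_flip_count M w"
proof -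
  have no_flip_Zero: "no_flip Zero x = 0" for x by (simp add: no_flip_def)
  have lower: "(\<Sum>i<Suc M. no_flip (w (i - 1)) (w i)) = no_flip_count M w"
    unfolding no_flip_count_def using w_tail[of M]
    by (subst sum.lessThan_Suc_shift) (simp add: w0 no_flip_Zero)
  have "{i. i < Suc M \<and> node_pattern (u i) (w (i - 1)) (w i)}
      = {..<Suc M} \<inter> {i. node_pattern (u i) (w (i - 1)) (w i)}" by auto
  then have patterns: "(\<Sum>i<Suc M. of_bool (node_pattern (u i) (w (i - 1)) (w i)) :: int)
      = int (card {i. i < Suc M \<and> node_pattern (u i) (w (i - 1)) (w i)})"
    by (simp only: sum_of_bool_eq finite_lessThan)
  show ?thesis
    unfolding strip_weight_def sum.distrib sum_subtractf
    using lower patterns by (simp add: no_flip_count_def sum_distrib_left[symmetric])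
qed

section \<open>Levels of a diagram\<close>

lemma is_node_iff_pattern: "is_node D a \<longleftrightarrow> node_pattern (D a) (D (a - e1)) (D (a - e2))"
  unfolding is_node_def E_def node_pattern_def by simp

lemma not_in_support: "q \<notin> support D \<Longrightarrow> D q = Zero"
  unfolding support_def by (cases "D q") auto

lemma node_near_support:
  assumes "is_node D a" shows "a \<in> support D \<or> a - e1 \<in> support D \<or> a - e2 \<in> support D"
  using assms not_in_support unfolding is_node_iff_pattern node_pattern_iff by blast

text \<open>Adjacent points lie on levels differing by at most one, so a path in the
  support starting on level 0 meets every level up to its endpoint.\<close>

lemma adjacent_level_step:
  assumes "adjacent y z" shows "fst z + snd z \<le> fst y + snd y + 1"
proof -
  obtain a b c d where yz: "y = (a, b)" "z = (c, d)" by (cases y, cases z)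
  have "(a - c, b - d) \<in> {(1, 0), (-1, 0), (0, 1), (0, -1), (1, -1), (-1, 1)}"
    using assms unfolding yz adjacent_def e1_def e2_def by simp
  then show ?thesis unfolding yz by auto
qed

lemma path_meets_levels:
  assumes "(\<lambda>u v. u \<in> K \<and> v \<in> K \<and> adjacent u v)\<^sup>*\<^sup>* x y" and "x \<in> K"
    and "fst x + snd x \<le> m" and "m \<le> fst y + snd y"
  shows "\<exists>q\<in>K. fst q + snd q = m"
  using assms(1,3,4)
proof (induction arbitrary: m rule: rtranclp_induct)
  case base
  then show ?case using assms(2) by force
next
  case (step y z)
  show ?case
  proof (cases "m \<le> fst y + snd y")
    case True
    then show ?thesis using step.IH step.prems by blast
  next
    case False
    then have "m = fst z + snd z" using adjacent_level_step[of y z] step.hyps(2) step.prems by auto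
    then show ?thesis using step.hyps(2) by blast
  qed
qed

lemma size_pts_quadrant:
  assumes "finite K" and "(0, 0) \<in> K" and "K \<subseteq> {m. fst m \<ge> 0 \<and> snd m \<ge> 0}"
  shows "size_pts K = Max ((\<lambda>m. fst m + snd m) ` K) + 1"
proof -
  have "Min (fst ` K) = 0" "Min (snd ` K) = 0"
    by (rule Min_eqI; use assms in \<open>force intro: rev_image_eqI\<close>)+
  then show ?thesis unfolding size_pts_def by simp
qed

text \<open>The word of level \<open>m\<close>: position \<open>i\<close> carries the point with
  first coordinate \<open>i - 1\<close>, so position 0 is a padding zero.\<close>

definition level :: "(int \<times> int \<Rightarrow> sym) \<Rightarrow> int \<Rightarrow> nat \<Rightarrow> sym" where
  "level D m i = D (int i - 1, m - (int i - 1))"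

definition nodes_on_level :: "(int \<times> int \<Rightarrow> sym) \<Rightarrow> int \<Rightarrow> nat" where
  "nodes_on_level D m = card {a. is_node D a \<and> fst a + snd a = m}"

text \<open>Setting: a diagram supported in the quadrant below the anti-diagonal of
  level \<open>k\<close>.  Words are then 0 from position \<open>M = k + 3\<close> on.\<close>

locale quadrant_diagram =
  fixes D :: "int \<times> int \<Rightarrow> sym" and k :: int
  assumes quadrant: "support D \<subseteq> {m. fst m \<ge> 0 \<and> snd m \<ge> 0}"
    and below: "\<And>q. q \<in> support D \<Longrightarrow> fst q + snd q \<le> k"
begin

definition M :: nat where "M = nat k + 3"

lemma level_zero:
  assumes "i = 0 \<or> m < 0 \<or> m > k \<or> (i \<ge> M \<and> m \<le> k + 1)"
  shows "level D m i = Zero"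
  unfolding level_def
proof (rule not_in_support)
  show "(int i - 1, m - (int i - 1)) \<notin> support D"
    using assms quadrant below unfolding M_def by force
qed

lemma level_point:
  assumes "q \<in> support D" shows "level D (fst q + snd q) (nat (fst q) + 1) \<noteq> Zero"
proof -
  have "int (nat (fst q) + 1) - 1 = fst q" using assms quadrant by auto
  then show ?thesis using assms unfolding level_def support_def by auto
qed

lemma node_bounds:
  assumes "is_node D a"
  shows "0 \<le> fst a \<and> fst a \<le> k + 1 \<and> 0 \<le> fst a + snd a \<and> fst a + snd a \<le> k + 1"
proof -
  obtain x y where a: "a = (x, y)" by (cases a)
  have "(x, y) \<in> support D \<or> (x - 1, y) \<in> support D \<or> (x, y - 1) \<in> support D"
    using node_near_support[OF assms] unfolding a e1_def e2_def by simp
  then show ?thesis unfolding a using quadrant below by fastforce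
qed

lemma finite_nodes: "finite {a. is_node D a}"
proof (rule finite_subset)
  show "{a. is_node D a} \<subseteq> {0..k + 1} \<times> {-(k + 1)..k + 1}"
    using node_bounds by force
qed simp

lemma nodes_on_level_eq:
  "nodes_on_level D m
     = card {i. i < Suc M \<and> node_pattern (level D m i) (level D (m - 1) (i - 1)) (level D (m - 1) i)}"
proof -
  define pt where "pt i = (int i - 1, m - (int i - 1))" for i :: nat
  let ?I = "{i. i < Suc M \<and> node_pattern (level D m i) (level D (m - 1) (i - 1)) (level D (m - 1) i)}"
  have pattern_node: "node_pattern (level D m i) (level D (m - 1) (i - 1)) (level D (m - 1) i)
      \<longleftrightarrow> is_node D (pt i)" if "i \<ge> 1" for i
  proof -
    have "int (i - 1) = int i - 1" using that by simp
    then show ?thesis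
      unfolding is_node_iff_pattern level_def pt_def e1_def e2_def by (simp add: algebra_simps)
  qed
  have pos: "i \<ge> 1" if "i \<in> ?I" for i
    using that level_zero by (cases i) (auto simp: node_pattern_iff)
  have "{a. is_node D a \<and> fst a + snd a = m} = pt ` ?I"
  proof (intro set_eqI iffI)
    fix a assume a: "a \<in> {a. is_node D a \<and> fst a + snd a = m}"
    define i where "i = nat (fst a) + 1"
    have "pt i = a" "i < Suc M"
      using node_bounds a unfolding pt_def i_def M_def by (cases a; force)+
    then show "a \<in> pt ` ?I" using pattern_node[of i] a unfolding i_def by force
  next
    fix a assume "a \<in> pt ` ?I"
    then show "a \<in> {a. is_node D a \<and> fst a + snd a = m}"
      using pattern_node pos unfolding pt_def by force
  qed
  moreover have "inj_on pt ?I" unfolding pt_def by (rule inj_onI) auto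
  ultimately show ?thesis unfolding nodes_on_level_def by (simp add: card_image)
qed

text \<open>All nodes lie on the levels \<open>0..k+1\<close>.\<close>

lemma num_nodes_by_level:
  assumes "k \<ge> 0"
  shows "num_nodes D = (\<Sum>j<nat k + 2. nodes_on_level D (int j))"
proof -
  have "{a. is_node D a} = (\<Union>j<nat k + 2. {a. is_node D a \<and> fst a + snd a = int j})"
  proof (intro set_eqI iffI)
    fix a assume a: "a \<in> {a. is_node D a}"
    then have "nat (fst a + snd a) < nat k + 2" "fst a + snd a = int (nat (fst a + snd a))"
      using node_bounds[of a] assms by auto
    then show "a \<in> (\<Union>j<nat k + 2. {a. is_node D a \<and> fst a + snd a = int j})" using a by blast
  qed auto
  then have "num_nodes D = card (\<Union>j<nat k + 2. {a. is_node D a \<and> fst a + snd a = int j})"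
    unfolding num_nodes_def by simp
  also have "\<dots> = (\<Sum>j<nat k + 2. nodes_on_level D (int j))"
    unfolding nodes_on_level_def by (rule card_UN_disjoint) (use finite_nodes in auto)
  finally show ?thesis .
qed

definition level_weight :: "nat \<Rightarrow> int" where
  "level_weight j = strip_weight M (level D (int j - 1)) (level D (int j))"

lemma level_weight_eq:
  assumes "int j \<le> k + 1"
  shows "level_weight j = 2 * int (nodes_on_level D (int j))
     + no_flip_count M (level D (int j)) - no_flip_count M (level D (int j - 1))"
  unfolding level_weight_def nodes_on_level_eq
  by (rule strip_weight_eq) (use level_zero assms in auto)

text \<open>The weights sum to twice the number of nodes: the flip counts telescope and
  vanish below level 0 and above level \<open>k\<close>.\<close>

lemma sum_level_weights:
  assumes "k \<ge> 0"
  shows "(\<Sum>j<nat k + 2. level_weight j) = 2 * int (num_nodes D)"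
proof -
  define F where "F j = no_flip_count M (level D (int j - 1))" for j
  have "(\<Sum>j<nat k + 2. level_weight j) = (\<Sum>j<nat k + 2. 2 * int (nodes_on_level D (int j)) + (F (Suc j) - F j))"
    by (rule sum.cong) (use assms in \<open>simp_all add: level_weight_eq F_def\<close>)
  also have "\<dots> = 2 * (\<Sum>j<nat k + 2. int (nodes_on_level D (int j))) + (F (nat k + 2) - F 0)"
    by (simp add: sum.distrib sum_distrib_left sum_lessThan_telescope)
  moreover have "F 0 = 0" "F (nat k + 2) = 0"
    unfolding F_def by (rule no_flip_count_zero, rule level_zero, use assms in simp)+
  ultimately show ?thesis using num_nodes_by_level[OF assms] by simp
qed

lemma level_weight_bottom:
  assumes "(0, 0) \<in> support D" shows "level_weight 0 \<ge> 3"
  unfolding level_weight_def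
proof (rule strip_weight_lower_zero[where j = 1])
  have "k \<ge> 0" using below[OF assms] by simp
  then show "level D (int 0) i = Zero" if "M \<le> i" for i using that level_zero by auto
  show "level D (int 0) 1 \<noteq> Zero" using level_point[OF assms] by simp
qed (simp_all add: level_zero)

lemma level_weight_top:
  assumes "q \<in> support D" and "fst q + snd q = k" shows "level_weight (nat k + 1) \<ge> 3"
  unfolding level_weight_def
proof (rule strip_weight_upper_zero[where j = "nat (fst q) + 1"])
  have "k \<ge> 0" using assms quadrant by force
  then show "level D (int (nat k + 1)) i = Zero" for i by (simp add: level_zero)
  show "level D (int (nat k + 1) - 1) i = Zero" if "M \<le> i" for i
    using that \<open>k \<ge> 0\<close> by (simp add: level_zero)
  show "level D (int (nat k + 1) - 1) (nat (fst q) + 1) \<noteq> Zero"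
    using level_point[OF assms(1)] assms(2) \<open>k \<ge> 0\<close> by simp
qed (simp add: level_zero)

lemma level_weight_middle:
  assumes "q \<in> support D" and "fst q + snd q = int j"
  shows "level_weight j \<ge> 1"
  unfolding level_weight_def
proof (rule strip_weight_ge_1[where j = "nat (fst q) + 1"])
  have "int j \<le> k" using below[OF assms(1)] assms(2) by simp
  then show "level D (int j - 1) i = Zero \<and> level D (int j) i = Zero" if "M \<le> i" for i
    using that by (simp add: level_zero)
  show "level D (int j - 1) (nat (fst q) + 1) \<noteq> Zero \<or> level D (int j) (nat (fst q) + 1) \<noteq> Zero"
    using level_point[OF assms(1)] assms(2) by simp
qed (simp_all add: level_zero)

theorem twice_nodes_lower_bound:
  assumes origin: "(0, 0) \<in> support D" and top: "q \<in> support D" "fst q + snd q = k"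
    and conn: "connected_pts (support D)"
  shows "2 * int (num_nodes D) \<ge> k + 6"
proof -
  have "k \<ge> 0" using top quadrant by force
  have middle: "level_weight (Suc j) \<ge> 1" if j: "j < nat k" for j
  proof -
    have "(\<lambda>u v. u \<in> support D \<and> v \<in> support D \<and> adjacent u v)\<^sup>*\<^sup>* (0, 0) q"
      using conn origin top(1) unfolding connected_pts_def by blast
    then obtain q' where "q' \<in> support D" "fst q' + snd q' = int (Suc j)"
      using path_meets_levels[OF _ origin, of q "int (Suc j)"] top(2) j by force
    then show ?thesis by (rule level_weight_middle)
  qed
  have "(\<Sum>j<nat k + 2. level_weight j)
      = level_weight 0 + (\<Sum>j<nat k. level_weight (Suc j)) + level_weight (nat k + 1)"
    unfolding add_2_eq_Suc' sum.lessThan_Suc_shift[of _ "Suc (nat k)"] by simp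
  moreover have "(\<Sum>j<nat k. level_weight (Suc j)) \<ge> (\<Sum>j<nat k. 1)"
    by (rule sum_mono) (rule middle, simp)
  ultimately have "(\<Sum>j<nat k + 2. level_weight j) \<ge> k + 6"
    using level_weight_bottom[OF origin] level_weight_top[OF top] \<open>k \<ge> 0\<close> by simp
  then show ?thesis using sum_level_weights[OF \<open>k \<ge> 0\<close>] by simp
qed

end

theorem mainTheorem5:
  fixes D :: "int \<times> int \<Rightarrow> sym" and d :: int
  assumes "newton_diagram2 D"
    and "size_pts (support D) = d"
    and "connected_pts (support D)"
    and "(0, 0) \<in> support D"
  shows "real (num_nodes D) \<ge> (real_of_int d + 5) / 2"
proof -
  let ?K = "support D"
  define k where "k = Max ((\<lambda>m. fst m + snd m) ` ?K)"
  have fin: "finite ?K" and quadrant: "?K \<subseteq> {m. fst m \<ge> 0 \<and> snd m \<ge> 0}"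
    using assms(1) unfolding newton_diagram2_def by auto
  have d: "d = k + 1"
    using size_pts_quadrant[OF fin assms(4) quadrant] assms(2) unfolding k_def by simp
  have "k \<in> (\<lambda>m. fst m + snd m) ` ?K"
    unfolding k_def using fin assms(4) by (intro Max_in) auto
  then obtain q where top: "q \<in> ?K" "fst q + snd q = k" by auto
  interpret quadrant_diagram D k
    by unfold_locales (use quadrant fin in \<open>auto simp: k_def\<close>)
  have "2 * int (num_nodes D) \<ge> k + 6"
    using twice_nodes_lower_bound[OF assms(4) top assms(3)] .
  then have "2 * real (num_nodes D) \<ge> real_of_int k + 6" by linarith
  then show ?thesis using d by simp
qed

end
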